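(* Let $L:\mathbb{R}^k\to\mathbb{R}^m$ be linear. If $t(L)>\frac{15}{16}2^{k-1}$ and $t(L)\neq 2^{k-1}$, then $L(e_i)\in\{-1,0,1\}^m$ for every $i\in[k]$.
   Context: $\mathbb{H}^n=\{0,1\}^n$, $e_1,\dots,e_k$ is the standard basis of $\mathbb{R}^k$, and $t(L)=|L^{-1}(\mathbb{H}^m)\cap\mathbb{H}^k|$. *)

theory Defs
  imports "HOL-Analysis.Analysis"
begin

definition hcube :: "(real ^ 'n) set" where
  "hcube = {x. \<forall>i. x $ i \<in> {0, 1}}"

definition tcount :: "(real ^ 'k \<Rightarrow> real ^ 'm) \<Rightarrow> nat" where
  "tcount L = card {x \<in> (hcube :: (real ^ 'k) set). L x \<in> (hcube :: (real ^ 'm) set)}"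

end

theory Submission
  imports Defs
begin

(* Suppose some entry L(e_i)_j lies outside {-1,0,1}. Identify points of H^k with subsets Y of [k].
   For Y not containing i, at most one of Y and Y + i is mapped into H^m, since the two images differ
   by L(e_i) in coordinate j. Hence t(L) = 2^(k-1) - |E|, where E is the set of pairs for which both
   points miss H^m. If t(L) <> 2^(k-1), pick Y0 in E and coordinates r, s witnessing that L(1_Y0) and
   L(1_(Y0+i)) miss H^m; with x(x-1) vanishing exactly on {0,1}, the degree-4 polynomial
   P(Y) = x_r(Y) (x_r(Y) - 1) x_s(Y+i) (x_s(Y+i) - 1), where x_r(Y) = L(1_Y)_r, is nonzero at Y0 and
   only on E. A nonzero polynomial of degree d on {0,1}^n is nonzero at at least 2^(n-d) points, so
   |E| >= 2^(k-5) and t(L) <= 15/16 2^(k-1). *)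

(* F Y is a polynomial of degree at most d in the 0/1 variables [l \<in> Y]: the point of the cube
   {0,1}^n is encoded by its support Y. *)
inductive cube_poly :: "nat \<Rightarrow> ('a set \<Rightarrow> real) \<Rightarrow> bool" where
  const: "cube_poly d (\<lambda>Y. c)"
| add: "cube_poly d F \<Longrightarrow> cube_poly d G \<Longrightarrow> cube_poly d (\<lambda>Y. F Y + G Y)"
| mult_var: "cube_poly d F \<Longrightarrow> cube_poly (Suc d) (\<lambda>Y. if l \<in> Y then F Y else 0)"

lemma cube_poly_mono: "cube_poly d F \<Longrightarrow> d \<le> e \<Longrightarrow> cube_poly e F"
proof (induction arbitrary: e rule: cube_poly.induct)
  case (mult_var d F l)
  then obtain e' where "e = Suc e'" "d \<le> e'"
    by (cases e) auto
  with mult_var show ?case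
    by (simp add: cube_poly.mult_var)
qed (auto intro: cube_poly.const cube_poly.add)

lemma cube_poly_scale: "cube_poly d F \<Longrightarrow> cube_poly d (\<lambda>Y. c * F Y)"
proof (induction rule: cube_poly.induct)
  case (add d F G)
  then show ?case
    using cube_poly.add by (simp add: distrib_left)
next
  case (mult_var d F l)
  have "(\<lambda>Y. c * (if l \<in> Y then F Y else 0)) = (\<lambda>Y. if l \<in> Y then c * F Y else 0)"
    by auto
  then show ?case
    using cube_poly.mult_var[OF mult_var.IH] by simp
qed (simp add: cube_poly.const)

lemma cube_poly_sum:
  "finite I \<Longrightarrow> (\<And>l. l \<in> I \<Longrightarrow> cube_poly d (G l)) \<Longrightarrow> cube_poly d (\<lambda>Y. \<Sum>l\<in>I. G l Y)"
proof (induction I rule: finite_induct)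
  case empty
  then show ?case
    using cube_poly.const[of d 0] by simp
next
  case (insert l I)
  then show ?case
    using cube_poly.add[of d "G l"] by simp
qed

lemma cube_poly_mult:
  "cube_poly d F \<Longrightarrow> cube_poly e G \<Longrightarrow> cube_poly (d + e) (\<lambda>Y. F Y * G Y)"
proof (induction rule: cube_poly.induct)
  case (const d c)
  have "cube_poly (d + e) G"
    by (rule cube_poly_mono[OF const]) simp
  then show ?case
    by (rule cube_poly_scale)
next
  case (add d F F')
  then show ?case
    using cube_poly.add[OF add.IH(1)[OF add.prems] add.IH(2)[OF add.prems]] by (simp add: distrib_right)
next
  case (mult_var d F l)
  have "(\<lambda>Y. (if l \<in> Y then F Y else 0) * G Y) = (\<lambda>Y. if l \<in> Y then F Y * G Y else 0)"
    by auto
  then show ?case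
    using cube_poly.mult_var[OF mult_var.IH[OF mult_var.prems]] by simp
qed

lemma cube_poly_sum_set:
  fixes a :: "'a::finite \<Rightarrow> real"
  shows "cube_poly 1 (\<lambda>Y. sum a Y)"
proof -
  have "sum a Y = (\<Sum>l\<in>UNIV. if l \<in> Y then a l else 0)" for Y
    by (simp add: sum.If_cases)
  moreover have "cube_poly 1 (\<lambda>Y. \<Sum>l\<in>UNIV. if l \<in> Y then a l else 0)"
    using cube_poly.mult_var[OF cube_poly.const, of 0] by (intro cube_poly_sum) simp_all
  ultimately show ?thesis
    by simp
qed

lemma cube_poly_insert: "cube_poly d F \<Longrightarrow> cube_poly d (\<lambda>Y. F (insert l Y))"
proof (induction rule: cube_poly.induct)
  case (mult_var d F m)
  show ?case
  proof (cases "m = l")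
    case True
    then show ?thesis
      using cube_poly_mono[OF mult_var.IH, of "Suc d"] by simp
  next
    case False
    then show ?thesis
      using cube_poly.mult_var[OF mult_var.IH, of m] by simp
  qed
qed (auto intro: cube_poly.const cube_poly.add)

lemma cube_poly_0_imp_const: "cube_poly 0 F \<Longrightarrow> \<exists>c. \<forall>Y. F Y = c"
proof (induction "0::nat" F rule: cube_poly.induct)
  case (add F G)
  then show ?case
    by force
qed auto

lemma cube_poly_derivative:
  "cube_poly d F \<Longrightarrow> cube_poly (d - 1) (\<lambda>Y. F (insert l Y) - F (Y - {l}))"
proof (induction rule: cube_poly.induct)
  case (const d c)
  then show ?case
    using cube_poly.const[of "d - 1" 0] by simp
next
  case (add d F G)
  have "(\<lambda>Y. F (insert l Y) + G (insert l Y) - (F (Y - {l}) + G (Y - {l})))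
      = (\<lambda>Y. (F (insert l Y) - F (Y - {l})) + (G (insert l Y) - G (Y - {l})))"
    by (simp add: algebra_simps)
  then show ?case
    using cube_poly.add[OF add.IH] by simp
next
  case (mult_var d F m)
  show ?case
  proof (cases "m = l")
    case True
    then show ?thesis
      using cube_poly_insert[OF mult_var.hyps] by simp
  next
    case False
    then have "(\<lambda>Y. (if m \<in> insert l Y then F (insert l Y) else 0) - (if m \<in> Y - {l} then F (Y - {l}) else 0))
        = (\<lambda>Y. if m \<in> Y then F (insert l Y) - F (Y - {l}) else 0)"
      by auto
    moreover have "cube_poly d (\<lambda>Y. if m \<in> Y then F (insert l Y) - F (Y - {l}) else 0)"
    proof (cases d)
      case 0
      then obtain c where "\<And>Y. F Y = c"
        using cube_poly_0_imp_const mult_var.hyps by blast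
      then show ?thesis
        using cube_poly.const[of d 0] by (simp cong: if_cong)
    next
      case (Suc d')
      then show ?thesis
        using cube_poly.mult_var[OF mult_var.IH, of m] by simp
    qed
    ultimately show ?thesis
      by simp
  qed
qed

lemma card_subsets_insert:
  assumes "finite I" "l \<notin> I"
  shows "card {Y. Y \<subseteq> insert l I \<and> P Y} =
    card {Y. Y \<subseteq> I \<and> P Y} + card {Y. Y \<subseteq> I \<and> P (insert l Y)}"
proof -
  let ?A = "{Y. Y \<subseteq> I \<and> P Y}" and ?B = "{Y. Y \<subseteq> I \<and> P (insert l Y)}"
  have "{Y. Y \<subseteq> insert l I \<and> P Y} = ?A \<union> insert l ` ?B"
  proof (intro equalityI subsetI)
    fix Y
    assume "Y \<in> {Y. Y \<subseteq> insert l I \<and> P Y}"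
    then show "Y \<in> ?A \<union> insert l ` ?B"
      using assms(2) by (cases "l \<in> Y") (auto intro!: image_eqI[of Y _ "Y - {l}"] simp: insert_absorb)
  qed (use assms(2) in auto)
  moreover have "inj_on (insert l) ?B"
    using assms(2) by (intro inj_onI) (metis Diff_insert_absorb mem_Collect_eq subsetD)
  moreover have "?A \<inter> insert l ` ?B = {}"
    using assms(2) by auto
  moreover have "finite ?A" "finite ?B"
    using assms(1) by (auto intro: finite_subset[of _ "Pow I"])
  ultimately show ?thesis
    by (simp add: card_Un_disjoint card_image)
qed

lemma card_nonzero_cube_poly:
  assumes "finite I" "cube_poly d F" "Y0 \<subseteq> I" "F Y0 \<noteq> 0"
  shows "2 ^ card I \<le> 2 ^ d * card {Y. Y \<subseteq> I \<and> F Y \<noteq> 0}"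
  using assms
proof (induction I arbitrary: F d Y0 rule: finite_induct)
  case empty
  then have "{Y. Y \<subseteq> {} \<and> F Y \<noteq> 0} = {{}}"
    by auto
  then show ?case
    by simp
next
  case (insert l I)
  define N where "N G = card {Y. Y \<subseteq> I \<and> G Y \<noteq> 0}" for G :: "'a set \<Rightarrow> real"
  define F' where "F' Y = F (insert l Y)" for Y
  define D where "D Y = F (insert l Y) - F (Y - {l})" for Y
  have split: "card {Y. Y \<subseteq> insert l I \<and> F Y \<noteq> 0} = N F + N F'"
    unfolding N_def F'_def using card_subsets_insert[OF insert.hyps] .
  have D_on_I: "D Y = F' Y - F Y" if "Y \<subseteq> I" for Y
  proof -
    have "Y - {l} = Y"
      using that insert.hyps(2) by blast
    then show ?thesis
      by (simp add: D_def F'_def)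
  qed
  (* Either the derivative D along l, of degree d - 1, is nonzero somewhere on Pow I, or F does not
     depend on l there and both halves of the cube contribute equally. *)
  show ?case
  proof (cases "\<exists>Y1 \<subseteq> I. D Y1 \<noteq> 0")
    case True
    then obtain Y1 where Y1: "Y1 \<subseteq> I" "D Y1 \<noteq> 0"
      by blast
    have D: "cube_poly (d - 1) D"
      unfolding D_def by (rule cube_poly_derivative[OF insert.prems(1)])
    have "d \<noteq> 0"
    proof
      assume "d = 0"
      then obtain c where "\<And>Y. F Y = c"
        using cube_poly_0_imp_const insert.prems(1) by blast
      then show False
        using Y1(2) by (simp add: D_def)
    qed
    have "N D \<le> card ({Y. Y \<subseteq> I \<and> F Y \<noteq> 0} \<union> {Y. Y \<subseteq> I \<and> F' Y \<noteq> 0})"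
      unfolding N_def using insert.hyps(1) D_on_I by (intro card_mono) auto
    also have "\<dots> \<le> N F + N F'"
      unfolding N_def by (rule card_Un_le)
    finally have "N D \<le> N F + N F'" .
    have "2 ^ card (insert l I) = 2 * 2 ^ card I"
      using insert.hyps by simp
    also have "\<dots> \<le> 2 * (2 ^ (d - 1) * N D)"
      using insert.IH[OF D Y1] unfolding N_def by simp
    also have "\<dots> \<le> 2 * 2 ^ (d - 1) * (N F + N F')"
      using \<open>N D \<le> N F + N F'\<close> by simp
    also have "2 * 2 ^ (d - 1) = (2::nat) ^ d"
      using \<open>d \<noteq> 0\<close> by (cases d) simp_all
    finally show ?thesis
      using split by simp
  next
    case False
    then have F'_eq: "F' Y = F Y" if "Y \<subseteq> I" for Y
      using D_on_I[OF that] that by auto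
    then have "{Y. Y \<subseteq> I \<and> F' Y \<noteq> 0} = {Y. Y \<subseteq> I \<and> F Y \<noteq> 0}"
      by auto
    then have "N F' = N F"
      unfolding N_def by simp
    have Y0': "Y0 - {l} \<subseteq> I"
      using insert.prems(2) by auto
    have "F (Y0 - {l}) \<noteq> 0"
    proof (cases "l \<in> Y0")
      case True
      then have "F Y0 = F' (Y0 - {l})"
        by (simp add: F'_def insert_absorb)
      then show ?thesis
        using F'_eq[OF Y0'] insert.prems(3) by simp
    next
      case False
      then show ?thesis
        using insert.prems(3) by simp
    qed
    then have "2 ^ card I \<le> 2 ^ d * N F"
      unfolding N_def by (rule insert.IH[OF insert.prems(1) Y0'])
    then show ?thesis
      using split \<open>N F' = N F\<close> insert.hyps by (simp add: distrib_left)
  qed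
qed

definition maps_into_cube :: "('r \<Rightarrow> 'a \<Rightarrow> real) \<Rightarrow> 'a set \<Rightarrow> bool" where
  "maps_into_cube A Y \<longleftrightarrow> (\<forall>r. (\<Sum>l\<in>Y. A r l) \<in> {0, 1})"

definition missed_pairs :: "('r \<Rightarrow> 'a \<Rightarrow> real) \<Rightarrow> 'a \<Rightarrow> 'a set set" where
  "missed_pairs A i = {Y. i \<notin> Y \<and> \<not> maps_into_cube A Y \<and> \<not> maps_into_cube A (insert i Y)}"

lemma tcount_eq_card_maps_into_cube:
  fixes L :: "real ^ 'k \<Rightarrow> real ^ 'm"
  assumes "linear L"
  shows "tcount L = card {Y. maps_into_cube (\<lambda>r l. L (axis l 1) $ r) Y}"
proof -
  define v :: "'k set \<Rightarrow> real ^ 'k" where "v Y = (\<chi> l. if l \<in> Y then 1 else 0)" for Y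
  have Lv: "L (v Y) $ r = (\<Sum>l\<in>Y. L (axis l 1) $ r)" for Y r
  proof -
    have "v Y = (\<Sum>l\<in>Y. axis l 1)"
      by (simp add: vec_eq_iff v_def axis_def)
    then have "L (v Y) = (\<Sum>l\<in>Y. L (axis l 1))"
      using linear_sum[OF assms] by (simp add: o_def)
    then show ?thesis
      by simp
  qed
  have "inj v"
    by (rule injI) (auto simp: v_def vec_eq_iff split: if_splits)
  moreover have "{x \<in> (hcube :: (real ^ 'k) set). L x \<in> (hcube :: (real ^ 'm) set)} =
      v ` {Y. maps_into_cube (\<lambda>r l. L (axis l 1) $ r) Y}"
  proof (intro equalityI subsetI)
    fix x :: "real ^ 'k"
    assume x: "x \<in> {x \<in> (hcube :: (real ^ 'k) set). L x \<in> (hcube :: (real ^ 'm) set)}"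
    then have "x = v {l. x $ l = 1}"
      by (auto simp: vec_eq_iff v_def hcube_def)
    with x show "x \<in> v ` {Y. maps_into_cube (\<lambda>r l. L (axis l 1) $ r) Y}"
      by (metis (mono_tags, lifting) Lv hcube_def image_eqI maps_into_cube_def mem_Collect_eq)
  next
    fix x :: "real ^ 'k"
    assume "x \<in> v ` {Y. maps_into_cube (\<lambda>r l. L (axis l 1) $ r) Y}"
    then obtain Y where x: "x = v Y" and Y: "maps_into_cube (\<lambda>r l. L (axis l 1) $ r) Y"
      by blast
    have "v Y \<in> hcube"
      by (simp add: hcube_def v_def)
    moreover have "L (v Y) \<in> hcube"
      using Y by (simp add: hcube_def maps_into_cube_def Lv)
    ultimately show "x \<in> {x \<in> (hcube :: (real ^ 'k) set). L x \<in> (hcube :: (real ^ 'm) set)}"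
      using x by simp
  qed
  ultimately show ?thesis
    unfolding tcount_def by (simp add: card_image inj_on_subset)
qed

lemma maps_into_cube_insert_entry:
  assumes "finite Y" "i \<notin> Y" "maps_into_cube A Y" "maps_into_cube A (insert i Y)"
  shows "A r i \<in> {-1, 0, 1}"
proof -
  have "(\<Sum>l\<in>insert i Y. A r l) = A r i + (\<Sum>l\<in>Y. A r l)"
    using assms(1,2) by simp
  moreover have "(\<Sum>l\<in>Y. A r l) \<in> {0, 1}" "(\<Sum>l\<in>insert i Y. A r l) \<in> {0, 1}"
    using assms(3,4) unfolding maps_into_cube_def by blast+
  ultimately show ?thesis
    by auto
qed

lemma card_maps_into_cube_add_card_missed_pairs:
  fixes A :: "'r \<Rightarrow> 'a::finite \<Rightarrow> real"
  assumes "A j i \<notin> {-1, 0, 1}"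
  shows "card {Y. maps_into_cube A Y} + card (missed_pairs A i) = 2 ^ (CARD('a) - 1)"
proof -
  define I where "I = - {i}"
  define G0 where "G0 = {Y. Y \<subseteq> I \<and> maps_into_cube A Y}"
  define G1 where "G1 = {Y. Y \<subseteq> I \<and> maps_into_cube A (insert i Y)}"
  have I: "finite I" "i \<notin> I" "insert i I = UNIV" "card I = CARD('a) - 1"
    unfolding I_def by (auto simp: Compl_eq_Diff_UNIV card_Diff_singleton)
  have "card {Y. maps_into_cube A Y} = card {Y. Y \<subseteq> insert i I \<and> maps_into_cube A Y}"
    using I(3) by simp
  also have "\<dots> = card G0 + card G1"
    unfolding G0_def G1_def by (rule card_subsets_insert[OF I(1,2)])
  also have "\<dots> = card (G0 \<union> G1)"
  proof -
    have "G0 \<inter> G1 = {}"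
      using maps_into_cube_insert_entry[of _ i A j] assms I(2)
      unfolding G0_def G1_def by (auto dest: finite_subset)
    then show ?thesis
      by (simp add: card_Un_disjoint G0_def G1_def)
  qed
  finally have good: "card {Y. maps_into_cube A Y} = card (G0 \<union> G1)" .
  have "Pow I = (G0 \<union> G1) \<union> missed_pairs A i"
    unfolding G0_def G1_def missed_pairs_def I_def by auto
  moreover have "(G0 \<union> G1) \<inter> missed_pairs A i = {}"
    unfolding G0_def G1_def missed_pairs_def by auto
  ultimately have "card (G0 \<union> G1) + card (missed_pairs A i) = card (Pow I)"
    by (simp add: card_Un_disjoint)
  then show ?thesis
    using good I(1,4) by (simp add: card_Pow)
qed

lemma cube_poly_sum_mult_sum_minus_1:
  fixes a :: "'a::finite \<Rightarrow> real"
  shows "cube_poly 2 (\<lambda>Y. sum a Y * (sum a Y - 1))"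
proof -
  have "cube_poly (1 + 1) (\<lambda>Y. sum a Y * (sum a Y + (- 1)))"
    by (intro cube_poly_mult cube_poly_sum_set cube_poly.add[OF cube_poly_sum_set cube_poly.const])
  then show ?thesis
    by (simp add: numeral_2_eq_2)
qed

lemma card_missed_pairs_lower_bound:
  fixes A :: "'r \<Rightarrow> 'a::finite \<Rightarrow> real"
  assumes "missed_pairs A i \<noteq> {}"
  shows "2 ^ (CARD('a) - 1) \<le> 16 * card (missed_pairs A i)"
proof -
  obtain Y0 where Y0: "i \<notin> Y0" "\<not> maps_into_cube A Y0" "\<not> maps_into_cube A (insert i Y0)"
    using assms unfolding missed_pairs_def by blast
  then obtain r s where r: "(\<Sum>l\<in>Y0. A r l) \<notin> {0, 1}" and s: "(\<Sum>l\<in>insert i Y0. A s l) \<notin> {0, 1}"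
    unfolding maps_into_cube_def by blast
  define q :: "real \<Rightarrow> real" where "q v = v * (v - 1)" for v
  have q_eq_0: "q v = 0 \<longleftrightarrow> v \<in> {0, 1}" for v
    by (simp add: q_def)
  define F where "F Y = q (\<Sum>l\<in>Y. A r l) * q (\<Sum>l\<in>insert i Y. A s l)" for Y
  have "cube_poly (2 + 2) F"
    unfolding F_def q_def
    by (intro cube_poly_mult cube_poly_sum_mult_sum_minus_1 cube_poly_insert[OF cube_poly_sum_mult_sum_minus_1])
  then have F: "cube_poly 4 F"
    by simp
  have "F Y0 \<noteq> 0"
    using r s by (simp add: F_def q_eq_0)
  then have "2 ^ card (- {i}) \<le> 2 ^ 4 * card {Y. Y \<subseteq> - {i} \<and> F Y \<noteq> 0}"
    using Y0(1) by (intro card_nonzero_cube_poly[OF _ F]) auto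
  also have "card {Y. Y \<subseteq> - {i} \<and> F Y \<noteq> 0} \<le> card (missed_pairs A i)"
    by (intro card_mono) (auto simp: F_def q_eq_0 missed_pairs_def maps_into_cube_def)
  finally show ?thesis
    by (simp add: Compl_eq_Diff_UNIV card_Diff_singleton)
qed

theorem lemma4p3:
  fixes L :: "real ^ 'k \<Rightarrow> real ^ 'm"
  assumes "linear L"
    and "real (tcount L) > 15 / 16 * 2 ^ (CARD('k) - 1)"
    and "tcount L \<noteq> 2 ^ (CARD('k) - 1)"
  shows "\<forall>i. \<forall>j. L (axis i 1) $ j \<in> {-1, 0, 1}"
proof (rule ccontr)
  assume "\<not> ?thesis"
  then obtain i j where entry: "L (axis i 1) $ j \<notin> {-1, 0, 1}"
    by blast
  define A where "A = (\<lambda>r l. L (axis l 1) $ r)"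
  have count: "tcount L + card (missed_pairs A i) = 2 ^ (CARD('k) - 1)"
    using tcount_eq_card_maps_into_cube[OF assms(1), folded A_def]
      card_maps_into_cube_add_card_missed_pairs[of A j i] entry
    by (simp add: A_def)
  then have "missed_pairs A i \<noteq> {}"
    using assms(3) by auto
  then have "2 ^ (CARD('k) - 1) \<le> 16 * card (missed_pairs A i)"
    by (rule card_missed_pairs_lower_bound)
  then have "2 ^ (CARD('k) - 1) \<le> 16 * real (card (missed_pairs A i))"
    by (metis of_nat_le_iff of_nat_mult of_nat_numeral of_nat_power)
  moreover have "real (tcount L) + real (card (missed_pairs A i)) = 2 ^ (CARD('k) - 1)"
    using count by (metis of_nat_add of_nat_numeral of_nat_power)
  ultimately show False
    using assms(2) by linarith
qed

end
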